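(* Let $w \in \mathfrak{S}_n$ and let $i \in \textsf{supp}(w)$ be such that the letter $i$ appears exactly once in every reduced word of $w$. Then deleting the letter $i$ from any reduced word of $w$ yields a word that is still reduced, and all words obtained in this way (from all reduced words of $w$) are reduced words of one and the same permutation $v$.
   Context: $\sigma_i$ ($1\le i\le n-1$) is the simple transposition swapping $i$ and $i+1$; products are compositions of maps. A reduced word of $w$ is a word $i_1\cdots i_\ell$ of minimal length $\ell=\ell(w)$ with $w=\sigma_{i_1}\cdots\sigma_{i_\ell}$; a word is reduced if it is a reduced word of the permutation it represents. $\textsf{supp}(w)$ is the set of letters appearing in (any) reduced word of $w$. *)

theory Defs
  imports "HOL-Combinatorics.Combinatorics"
begin

definition stransp :: "nat \<Rightarrow> nat \<Rightarrow> nat" where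
  "stransp i = transpose i (Suc i)"

definition word_perm :: "nat list \<Rightarrow> nat \<Rightarrow> nat" where
  "word_perm ws = foldr (\<lambda>i p. stransp i \<circ> p) ws id"

definition is_word :: "nat \<Rightarrow> nat list \<Rightarrow> bool" where
  "is_word n ws \<longleftrightarrow> set ws \<subseteq> {1..<n}"

definition reduced_word :: "nat \<Rightarrow> (nat \<Rightarrow> nat) \<Rightarrow> nat list \<Rightarrow> bool" where
  "reduced_word n w ws \<longleftrightarrow> is_word n ws \<and> word_perm ws = w \<and>
     (\<forall>ws'. is_word n ws' \<and> word_perm ws' = w \<longrightarrow> length ws \<le> length ws')"

definition is_reduced :: "nat \<Rightarrow> nat list \<Rightarrow> bool" where
  "is_reduced n ws \<longleftrightarrow> reduced_word n (word_perm ws) ws"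

definition supp :: "nat \<Rightarrow> (nat \<Rightarrow> nat) \<Rightarrow> nat set" where
  "supp n w = {i. \<exists>ws. reduced_word n w ws \<and> i \<in> set ws}"

end

theory Submission
  imports Defs
begin

text \<open>Reduced words have length equal to the number of inversions. If the letter \<open>i\<close> occurs
  exactly once in a reduced word \<open>a i b\<close>, then \<open>a\<close> and \<open>b\<close> preserve \<open>{1..i}\<close>, so
  \<open>w = U s\<^sub>i V\<close> sends exactly one \<open>p \<le> i\<close> above \<open>i\<close> and exactly one \<open>q > i\<close> to at most \<open>i\<close>;
  deleting \<open>i\<close> yields \<open>w (p q)\<close>, which depends only on \<open>w\<close>. Right multiplication by
  \<open>(p q)\<close> lowers the number of inversions by exactly one unless some \<open>k\<close> between \<open>p\<close> and \<open>q\<close>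
  has \<open>w k\<close> between \<open>w q\<close> and \<open>w p\<close>. Such a \<open>k\<close> can be moved next to position \<open>i\<close>
  along descents of \<open>w\<close>, where it yields a reduced word of \<open>w\<close> with two letters \<open>i\<close>.\<close>

definition inversions :: "nat \<Rightarrow> (nat \<Rightarrow> nat) \<Rightarrow> (nat \<times> nat) set" where
  "inversions n x = {(a, b). a \<in> {1..n} \<and> b \<in> {1..n} \<and> a < b \<and> x b < x a}"

definition n_inversions :: "nat \<Rightarrow> (nat \<Rightarrow> nat) \<Rightarrow> nat" where
  "n_inversions n x = card (inversions n x)"

lemma word_perm_Nil [simp]: "word_perm [] = id"
  by (simp add: word_perm_def)

lemma word_perm_Cons [simp]: "word_perm (j # ws) = stransp j \<circ> word_perm ws"
  by (simp add: word_perm_def)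

lemma word_perm_append [simp]: "word_perm (xs @ ys) = word_perm xs \<circ> word_perm ys"
  by (induction xs) (simp_all add: o_assoc)

lemma word_perm_snoc: "word_perm (ws @ [j]) = word_perm ws \<circ> stransp j"
  by simp

lemma is_word_Nil [simp]: "is_word n []"
  by (simp add: is_word_def)

lemma is_word_Cons [simp]: "is_word n (j # ws) \<longleftrightarrow> j \<in> {1..<n} \<and> is_word n ws"
  by (auto simp: is_word_def)

lemma is_word_append [simp]: "is_word n (xs @ ys) \<longleftrightarrow> is_word n xs \<and> is_word n ys"
  by (auto simp: is_word_def)

lemma stransp_apply [simp]: "stransp j j = Suc j" "stransp j (Suc j) = j"
  by (simp_all add: stransp_def)

lemma stransp_apply_other [simp]: "m \<noteq> j \<Longrightarrow> m \<noteq> Suc j \<Longrightarrow> stransp j m = m"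
  by (simp add: stransp_def)

lemma comp_stransp_stransp [simp]: "x \<circ> stransp j \<circ> stransp j = x"
  by (simp add: stransp_def o_assoc [symmetric])

lemma stransp_permutes: "1 \<le> j \<Longrightarrow> j < n \<Longrightarrow> stransp j permutes {1..n}"
  unfolding stransp_def by (rule permutes_swap_id) auto

lemma permutes_comp_stransp:
  "x permutes {1..n} \<Longrightarrow> 1 \<le> j \<Longrightarrow> j < n \<Longrightarrow> x \<circ> stransp j permutes {1..n}"
  by (intro permutes_compose stransp_permutes)

lemma word_perm_permutes: "is_word n ws \<Longrightarrow> word_perm ws permutes {1..n}"
proof (induction ws)
  case Nil
  show ?case
    by (simp only: word_perm_Nil) (rule permutes_id)
next
  case (Cons j ws)
  then have "stransp j \<circ> word_perm ws permutes {1..n}"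
    by (intro permutes_compose stransp_permutes) auto
  then show ?case
    by (simp only: word_perm_Cons)
qed

lemma permutes_apply_neq: "x permutes S \<Longrightarrow> a \<noteq> b \<Longrightarrow> x a \<noteq> x b"
  by (metis permutes_inj injD)

lemma finite_inversions: "finite (inversions n x)"
  by (rule finite_subset [of _ "{1..n} \<times> {1..n}"]) (auto simp: inversions_def)

lemma n_inversions_id [simp]: "n_inversions n id = 0"
proof -
  have "inversions n id = {}"
    by (auto simp: inversions_def)
  then show ?thesis
    by (simp add: n_inversions_def)
qed

lemma stransp_image_inversions_subset:
  assumes "1 \<le> j" "j < n"
  shows "(\<lambda>(a, b). (stransp j a, stransp j b)) ` (inversions n (x \<circ> stransp j) - {(j, Suc j)})
           \<subseteq> inversions n x - {(j, Suc j)}"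
  using assms by (auto simp: inversions_def stransp_def transpose_def split: if_splits)

lemma card_inversions_comp_stransp:
  assumes "1 \<le> j" "j < n"
  shows "card (inversions n (x \<circ> stransp j) - {(j, Suc j)}) = card (inversions n x - {(j, Suc j)})"
proof -
  let ?f = "\<lambda>(a, b). (stransp j a, stransp j b)"
  have inj: "inj ?f"
    by (rule injI) (auto simp: stransp_def transpose_eq_iff)
  have le: "card (inversions n (y \<circ> stransp j) - {(j, Suc j)}) \<le> card (inversions n y - {(j, Suc j)})"
    for y
    using card_inj_on_le [OF inj_on_subset [OF inj subset_UNIV]
        stransp_image_inversions_subset [OF assms, of y]] finite_inversions by blast
  show ?thesis
    using le [of x] le [of "x \<circ> stransp j"] by simp
qed

lemma n_inversions_comp_stransp_descent:
  assumes "1 \<le> j" "j < n" "x (Suc j) < x j"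
  shows "n_inversions n (x \<circ> stransp j) + 1 = n_inversions n x"
proof -
  have "(j, Suc j) \<in> inversions n x" "(j, Suc j) \<notin> inversions n (x \<circ> stransp j)"
    using assms by (auto simp: inversions_def stransp_def)
  moreover from this have "card (inversions n x) > 0"
    using finite_inversions card_gt_0_iff by blast
  ultimately show ?thesis
    using card_inversions_comp_stransp [OF assms(1,2), of x] finite_inversions
    by (simp add: n_inversions_def card_Diff_singleton)
qed

lemma n_inversions_comp_stransp_ascent:
  assumes "1 \<le> j" "j < n" "x j < x (Suc j)"
  shows "n_inversions n (x \<circ> stransp j) = n_inversions n x + 1"
  using n_inversions_comp_stransp_descent [OF assms(1,2), of "x \<circ> stransp j"] assms(3)
  by simp

lemma n_inversions_comp_stransp_le:
  assumes "x permutes {1..n}" "1 \<le> j" "j < n"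
  shows "n_inversions n (x \<circ> stransp j) \<le> n_inversions n x + 1"
proof -
  have "x j \<noteq> x (Suc j)"
    using permutes_apply_neq [OF assms(1)] by simp
  then consider "x (Suc j) < x j" | "x j < x (Suc j)"
    by linarith
  then show ?thesis
    using n_inversions_comp_stransp_descent n_inversions_comp_stransp_ascent assms
    by cases fastforce+
qed

lemma n_inversions_word_perm_le: "is_word n ws \<Longrightarrow> n_inversions n (word_perm ws) \<le> length ws"
proof (induction ws rule: rev_induct)
  case (snoc j ws)
  then have "n_inversions n (word_perm (ws @ [j])) \<le> n_inversions n (word_perm ws) + 1"
    unfolding word_perm_snoc by (intro n_inversions_comp_stransp_le word_perm_permutes) auto
  then show ?case
    using snoc by (simp del: word_perm_append)
qed simp

lemma permutes_ascending_eq_id: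
  assumes x: "x permutes {1..n}" and asc: "\<And>j. 1 \<le> j \<Longrightarrow> j < n \<Longrightarrow> x j < x (Suc j)"
  shows "x = id"
proof -
  have range: "m \<in> {1..n} \<Longrightarrow> x m \<in> {1..n}" for m
    using permutes_in_image [OF x] by auto
  have ge: "1 \<le> m \<Longrightarrow> m \<le> n \<Longrightarrow> m \<le> x m" for m
  proof (induction m)
    case (Suc m)
    then show ?case
      using range [of 1] asc [of m] by (cases "m = 0") auto
  qed simp
  have le: "d < n \<Longrightarrow> x (n - d) \<le> n - d" for d
  proof (induction d)
    case 0
    then show ?case
      using range [of n] by auto
  next
    case (Suc d)
    then have "x (n - Suc d) < x (n - d)"
      using asc [of "n - Suc d"] by (simp add: Suc_diff_Suc)
    with Suc show ?case
      by simp
  qed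
  show ?thesis
  proof
    fix m
    show "x m = id m"
      using ge [of m] le [of "n - m"] permutes_not_in [OF x, of m]
      by (cases "m \<in> {1..n}") auto
  qed
qed

lemma exists_word_n_inversions:
  "x permutes {1..n} \<Longrightarrow> \<exists>ws. is_word n ws \<and> word_perm ws = x \<and> length ws = n_inversions n x"
proof (induction "n_inversions n x" arbitrary: x rule: less_induct)
  case less
  show ?case
  proof (cases "x = id")
    case True
    then show ?thesis
      by (intro exI [of _ "[]"]) simp
  next
    case False
    then obtain j where j: "1 \<le> j" "j < n" and "\<not> x j < x (Suc j)"
      using permutes_ascending_eq_id [OF less.prems] by blast
    moreover have "x j \<noteq> x (Suc j)"
      using permutes_apply_neq [OF less.prems] by simp
    ultimately have len: "n_inversions n (x \<circ> stransp j) + 1 = n_inversions n x"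
      by (intro n_inversions_comp_stransp_descent) auto
    obtain ws where "is_word n ws" "word_perm ws = x \<circ> stransp j"
        "length ws = n_inversions n (x \<circ> stransp j)"
      using less.hyps [OF _ permutes_comp_stransp [OF less.prems j]] len by auto
    then show ?thesis
      using j len by (intro exI [of _ "ws @ [j]"]) simp
  qed
qed

lemma reduced_word_iff_length:
  assumes "x permutes {1..n}"
  shows "reduced_word n x ws \<longleftrightarrow> is_word n ws \<and> word_perm ws = x \<and> length ws = n_inversions n x"
  using exists_word_n_inversions [OF assms] n_inversions_word_perm_le [of n ws]
    n_inversions_word_perm_le [of n]
  unfolding reduced_word_def by (metis le_antisym)

lemma n_inversions_comp_transpose:
  assumes "x permutes {1..n}" "1 \<le> p" "p < q" "q \<le> n" "x q < x p"
    and "\<And>k. p < k \<Longrightarrow> k < q \<Longrightarrow> x k < x q \<or> x p < x k"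
  shows "n_inversions n (x \<circ> transpose p q) + 1 = n_inversions n x"
  using assms
proof (induction q arbitrary: x rule: less_induct)
  case (less q)
  show ?case
  proof (cases "q = Suc p")
    case True
    show ?thesis
      unfolding True stransp_def [symmetric]
      by (rule n_inversions_comp_stransp_descent) (use less.prems True in auto)
  next
    case False
    define j where "j = q - 1"
    have j: "1 \<le> j" "j < n" "Suc j = q" "p < j"
      using less.prems False by (auto simp: j_def)
    define z where "z = x \<circ> stransp j \<circ> transpose p j"
    have "transpose p q = stransp j \<circ> transpose p j \<circ> stransp j"
      using transpose_comp_triple [where a = q and b = j and c = p] j
      by (simp add: stransp_def transpose_commute)
    then have xt: "x \<circ> transpose p q = z \<circ> stransp j"
      by (simp add: z_def o_assoc)
    have "x \<circ> stransp j permutes {1..n}"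
      using less.prems(1) j by (intro permutes_comp_stransp)
    then have IH: "n_inversions n z + 1 = n_inversions n (x \<circ> stransp j)"
      unfolding z_def by (rule less.IH [rotated]) (use less.prems j in auto)
    have z: "z j = x p" "z (Suc j) = x j"
      using j(3) [symmetric] j(4) by (simp_all add: z_def)
    \<comment> \<open>\<open>x j\<close> is not between \<open>x q\<close> and \<open>x p\<close>, so the two outer factors \<open>stransp j\<close>
      change the number of inversions in opposite directions.\<close>
    from less.prems(6) [of j] j consider "x p < x j" | "x j < x q"
      by auto
    then show ?thesis
    proof cases
      case 1
      then have "n_inversions n (x \<circ> stransp j) + 1 = n_inversions n x"
        using j less.prems(5) by (intro n_inversions_comp_stransp_descent) auto
      moreover have "n_inversions n (z \<circ> stransp j) = n_inversions n z + 1"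
        using j 1 z by (intro n_inversions_comp_stransp_ascent) auto
      ultimately show ?thesis
        unfolding xt using IH by linarith
    next
      case 2
      then have "n_inversions n (x \<circ> stransp j) = n_inversions n x + 1"
        using j by (intro n_inversions_comp_stransp_ascent) auto
      moreover have "n_inversions n (z \<circ> stransp j) + 1 = n_inversions n z"
        using j 2 z less.prems(5) by (intro n_inversions_comp_stransp_descent) auto
      ultimately show ?thesis
        unfolding xt using IH by linarith
    qed
  qed
qed

lemma stransp_le_iff: "j \<noteq> i \<Longrightarrow> stransp j m \<le> i \<longleftrightarrow> m \<le> i"
  by (auto simp: stransp_def transpose_def)

lemma word_perm_le_iff: "i \<notin> set ws \<Longrightarrow> word_perm ws m \<le> i \<longleftrightarrow> m \<le> i"
  by (induction ws arbitrary: m) (auto simp: stransp_le_iff)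

definition single_crossing :: "nat \<Rightarrow> nat \<Rightarrow> (nat \<Rightarrow> nat) \<Rightarrow> nat \<Rightarrow> nat \<Rightarrow> bool" where
  "single_crossing n i x p q \<longleftrightarrow> 1 \<le> p \<and> p \<le> i \<and> i < q \<and> q \<le> n \<and> i < x p \<and> x q \<le> i \<and>
     (\<forall>m. 1 \<le> m \<and> m \<le> i \<and> m \<noteq> p \<longrightarrow> x m \<le> i) \<and>
     (\<forall>m. i < m \<and> m \<le> n \<and> m \<noteq> q \<longrightarrow> i < x m)"

lemma single_crossing_unique:
  "single_crossing n i x p q \<Longrightarrow> single_crossing n i x p' q' \<Longrightarrow> p' = p \<and> q' = q"
  unfolding single_crossing_def by (meson leD)

lemma single_crossing_comp_stransp:
  assumes "single_crossing n i x p q" "1 \<le> j" "j < n" "j \<noteq> i"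
  shows "single_crossing n i (x \<circ> stransp j) (stransp j p) (stransp j q)"
  using assms unfolding single_crossing_def by (auto simp: stransp_def transpose_def)

lemma single_crossing_block_factorization:
  assumes U: "U permutes {1..n}" "\<And>m. U m \<le> i \<longleftrightarrow> m \<le> i"
    and V: "V permutes {1..n}" "\<And>m. V m \<le> i \<longleftrightarrow> m \<le> i"
    and i: "1 \<le> i" "i < n" and p: "V p = i" and q: "V q = Suc i"
  shows "single_crossing n i (U \<circ> stransp i \<circ> V) p q"
  unfolding single_crossing_def
proof (intro conjI allI impI)
  show "1 \<le> p" "q \<le> n"
    using permutes_in_image [OF V(1), of p] permutes_in_image [OF V(1), of q] p q i by auto
  show "p \<le> i" "i < q"
    using V(2) [of p] V(2) [of q] p q by auto
  show "i < (U \<circ> stransp i \<circ> V) p" "(U \<circ> stransp i \<circ> V) q \<le> i"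
    using U(2) [of i] U(2) [of "Suc i"] p q by auto
next
  fix m
  assume m: "1 \<le> m \<and> m \<le> i \<and> m \<noteq> p"
  have "V m \<noteq> i"
    using permutes_apply_neq [OF V(1)] p m by metis
  moreover have "V m \<le> i"
    using V(2) [of m] m by simp
  ultimately show "(U \<circ> stransp i \<circ> V) m \<le> i"
    using U(2) by simp
next
  fix m
  assume m: "i < m \<and> m \<le> n \<and> m \<noteq> q"
  have "V m \<noteq> Suc i"
    using permutes_apply_neq [OF V(1)] q m by metis
  moreover have "\<not> V m \<le> i"
    using V(2) [of m] m by simp
  ultimately show "i < (U \<circ> stransp i \<circ> V) m"
    using U(2) [of "V m"] by simp
qed

lemma word_perm_remove_letter:
  assumes i: "1 \<le> i" "i < n" and words: "is_word n a" "is_word n b"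
    and letter: "i \<notin> set a" "i \<notin> set b"
  shows "\<exists>p q. single_crossing n i (word_perm (a @ i # b)) p q \<and>
           word_perm (a @ b) = word_perm (a @ i # b) \<circ> transpose p q"
proof -
  define U where "U = word_perm a"
  define V where "V = word_perm b"
  have U: "U permutes {1..n}" "\<And>m. U m \<le> i \<longleftrightarrow> m \<le> i"
    unfolding U_def using word_perm_permutes [OF words(1)] word_perm_le_iff [OF letter(1)] by auto
  have V: "V permutes {1..n}" "\<And>m. V m \<le> i \<longleftrightarrow> m \<le> i"
    unfolding V_def using word_perm_permutes [OF words(2)] word_perm_le_iff [OF letter(2)] by auto
  obtain p q where p: "V p = i" and q: "V q = Suc i"
    using permutes_surj [OF V(1)] by (metis surjD)
  have "stransp i \<circ> V = V \<circ> transpose p q"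
    using transpose_comp_eq [OF permutes_bij [OF V(1)], of i "Suc i"] p q
      inv_f_eq [OF permutes_inj [OF V(1)]] by (simp add: stransp_def)
  then have "word_perm (a @ b) = word_perm (a @ i # b) \<circ> transpose p q"
    by (simp add: U_def V_def o_assoc [symmetric])
  moreover have "single_crossing n i (word_perm (a @ i # b)) p q"
    using single_crossing_block_factorization [OF U V i p q] by (simp add: U_def V_def o_assoc)
  ultimately show ?thesis
    by blast
qed

definition repeats_in_reduced_word :: "nat \<Rightarrow> nat \<Rightarrow> (nat \<Rightarrow> nat) \<Rightarrow> bool" where
  "repeats_in_reduced_word n i x \<longleftrightarrow> (\<exists>ws. reduced_word n x ws \<and> 2 \<le> count_list ws i)"

lemma exists_reduced_word: "x permutes {1..n} \<Longrightarrow> \<exists>ws. reduced_word n x ws"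
  using exists_word_n_inversions reduced_word_iff_length by blast

lemma reduced_word_snoc_descent:
  assumes x: "x permutes {1..n}" and j: "1 \<le> j" "j < n" "x (Suc j) < x j"
    and ws: "reduced_word n (x \<circ> stransp j) ws"
  shows "reduced_word n x (ws @ [j])"
proof -
  have "n_inversions n (x \<circ> stransp j) + 1 = n_inversions n x"
    using n_inversions_comp_stransp_descent j .
  then show ?thesis
    using ws j unfolding reduced_word_iff_length [OF x]
      reduced_word_iff_length [OF permutes_comp_stransp [OF x j(1,2)]]
    by (simp add: word_perm_snoc)
qed

lemma repeats_in_reduced_word_descent:
  assumes "x permutes {1..n}" "1 \<le> j" "j < n" "x (Suc j) < x j"
    and "repeats_in_reduced_word n i (x \<circ> stransp j)"
  shows "repeats_in_reduced_word n i x"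
proof -
  obtain ws where "reduced_word n (x \<circ> stransp j) ws" "2 \<le> count_list ws i"
    using assms(5) by (auto simp: repeats_in_reduced_word_def)
  then show ?thesis
    using reduced_word_snoc_descent [OF assms(1-4)] unfolding repeats_in_reduced_word_def
    by (intro exI [of _ "ws @ [j]"]) auto
qed

text \<open>If \<open>x \<circ> stransp i\<close> moves some element across \<open>i\<close>, every reduced word of it already
  contains the letter \<open>i\<close>; appending \<open>i\<close> gives a second occurrence.\<close>

lemma repeats_in_reduced_word_crossing:
  assumes x: "x permutes {1..n}" and i: "1 \<le> i" "i < n" "x (Suc i) < x i"
    and m: "\<not> ((x \<circ> stransp i) m \<le> i \<longleftrightarrow> m \<le> i)"
  shows "repeats_in_reduced_word n i x"
proof -
  obtain ws where ws: "reduced_word n (x \<circ> stransp i) ws"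
    using exists_reduced_word [OF permutes_comp_stransp [OF x i(1,2)]] by blast
  then have "i \<in> set ws"
    using word_perm_le_iff [of i ws m] m by (auto simp: reduced_word_def)
  then have "1 \<le> count_list ws i"
    using count_list_0_iff [of ws i] by linarith
  then show ?thesis
    using reduced_word_snoc_descent [OF x i ws] unfolding repeats_in_reduced_word_def
    by (intro exI [of _ "ws @ [i]"]) auto
qed

text \<open>A position \<open>k\<close> strictly between \<open>p\<close> and \<open>q\<close> whose value lies strictly between \<open>x q\<close> and
  \<open>x p\<close> is moved to \<open>i\<close> (or \<open>Suc i\<close>), and then the crossing pair is shrunk to \<open>(p, Suc i)\<close>
  (or \<open>(i, q)\<close>); every move either keeps \<open>x\<close> or passes to \<open>x \<circ> stransp j\<close> along a descent.\<close>

lemma repeats_if_between_eq: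
  assumes "x permutes {1..n}" "1 \<le> i" "i < n" "single_crossing n i x p q"
    and "p < i" "x q < x i" "x i < x p"
  shows "repeats_in_reduced_word n i x"
  using assms
proof (induction q arbitrary: x rule: less_induct)
  case (less q)
  note c = less.prems(4) [unfolded single_crossing_def]
  show ?case
  proof (cases "q = Suc i")
    case True
    show ?thesis
      by (rule repeats_in_reduced_word_crossing [where m = p]) (use less.prems c True in auto)
  next
    case False
    define j where "j = q - 1"
    have j: "1 \<le> j" "j < n" "Suc j = q" "i < j"
      using c False by (auto simp: j_def)
    have "x i \<le> i" "i < x j"
      using c j less.prems(5) by auto
    then have descent: "x (Suc j) < x j"
      using less.prems(6) j(3) by simp
    define y where "y = x \<circ> stransp j"
    have "y permutes {1..n}"
      unfolding y_def using less.prems(1) j(1,2) by (rule permutes_comp_stransp)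
    moreover have "single_crossing n i y p j"
      using single_crossing_comp_stransp [OF less.prems(4) j(1,2)] j(3) [symmetric] j(4)
        less.prems(5) by (simp add: y_def)
    moreover have "y j = x q" "y i = x i" "y p = x p"
      using j(3) [symmetric] j(4) less.prems(5) by (simp_all add: y_def)
    ultimately have "repeats_in_reduced_word n i y"
      using less.prems(2,3,5-7) j by (intro less.IH [of j y]) auto
    then show ?thesis
      using repeats_in_reduced_word_descent [OF less.prems(1) j(1,2) descent] by (simp add: y_def)
  qed
qed

lemma repeats_if_between_le:
  assumes "x permutes {1..n}" "1 \<le> i" "i < n" "single_crossing n i x p q"
    and "p < k" "k \<le> i" "x q < x k" "x k < x p"
  shows "repeats_in_reduced_word n i x"
  using assms
proof (induction "i - k" arbitrary: x k)
  case 0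
  then show ?case
    using repeats_if_between_eq [of x n i p q] by simp
next
  case (Suc d)
  note c = Suc.prems(4) [unfolded single_crossing_def]
  have k: "1 \<le> k" "k < n" "Suc k \<le> i"
    using Suc c by auto
  have next_le: "x (Suc k) \<le> i"
    using c k Suc.prems(5) by auto
  have "x k \<noteq> x (Suc k)"
    using permutes_apply_neq [OF Suc.prems(1)] by simp
  then consider "x (Suc k) < x k" | "x k < x (Suc k)"
    by linarith
  then show ?case
  proof cases
    case 1
    define y where "y = x \<circ> stransp k"
    have "y permutes {1..n}"
      unfolding y_def using Suc.prems(1) k(1,2) by (rule permutes_comp_stransp)
    moreover have "single_crossing n i y p q"
      using single_crossing_comp_stransp [OF Suc.prems(4) k(1,2)] k Suc.prems(5) c
      by (simp add: y_def)
    moreover have "y (Suc k) = x k" "y q = x q" "y p = x p"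
      using k Suc.prems(5) c by (simp_all add: y_def)
    ultimately have "repeats_in_reduced_word n i y"
      using Suc.prems(2,3,5-8) Suc.hyps(2) k by (intro Suc.hyps(1) [of "Suc k" y]) auto
    then show ?thesis
      using repeats_in_reduced_word_descent [OF Suc.prems(1) k(1,2) 1] by (simp add: y_def)
  next
    case 2
    show ?thesis
      using Suc k 2 next_le c by (intro Suc.hyps(1) [of "Suc k" x]) auto
  qed
qed

lemma repeats_if_between_eq_Suc:
  assumes "x permutes {1..n}" "1 \<le> i" "i < n" "single_crossing n i x p q"
    and "Suc i < q" "x q < x (Suc i)" "x (Suc i) < x p"
  shows "repeats_in_reduced_word n i x"
  using assms
proof (induction "i - p" arbitrary: x p)
  case 0
  note c = "0.prems"(4) [unfolded single_crossing_def]
  have "p = i"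
    using "0.hyps" c by simp
  then show ?case
    by (intro repeats_in_reduced_word_crossing [where m = q]) (use "0.prems" c in auto)
next
  case (Suc d)
  note c = Suc.prems(4) [unfolded single_crossing_def]
  have p: "1 \<le> p" "p < n" "Suc p \<le> i"
    using Suc c by auto
  have "x (Suc p) \<le> i"
    using c p by simp
  then have descent: "x (Suc p) < x p"
    using c by simp
  define y where "y = x \<circ> stransp p"
  have "y permutes {1..n}"
    unfolding y_def using Suc.prems(1) p(1,2) by (rule permutes_comp_stransp)
  moreover have "single_crossing n i y (Suc p) q"
    using single_crossing_comp_stransp [OF Suc.prems(4) p(1,2)] p Suc.prems(5) c
    by (simp add: y_def)
  moreover have "y (Suc p) = x p" "y q = x q" "y (Suc i) = x (Suc i)"
    using p Suc.prems(5) by (simp_all add: y_def)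
  ultimately have "repeats_in_reduced_word n i y"
    using Suc.prems(2,3,5-7) Suc.hyps(2) by (intro Suc.hyps(1) [of "Suc p" y]) auto
  then show ?case
    using repeats_in_reduced_word_descent [OF Suc.prems(1) p(1,2) descent] by (simp add: y_def)
qed

lemma repeats_if_between_gt:
  assumes "x permutes {1..n}" "1 \<le> i" "i < n" "single_crossing n i x p q"
    and "i < k" "k < q" "x q < x k" "x k < x p"
  shows "repeats_in_reduced_word n i x"
  using assms
proof (induction "k - Suc i" arbitrary: x k)
  case 0
  then have "k = Suc i"
    by simp
  with "0.prems" show ?case
    using repeats_if_between_eq_Suc [of x n i p q] by simp
next
  case (Suc d)
  note c = Suc.prems(4) [unfolded single_crossing_def]
  define j where "j = k - 1"
  have j: "1 \<le> j" "j < n" "Suc j = k" "i < j"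
    using Suc c by (auto simp: j_def)
  have prev_gt: "i < x j"
    using c j Suc.prems(6) by auto
  have "x j \<noteq> x k"
    using permutes_apply_neq [OF Suc.prems(1)] j(3) by auto
  then consider "x k < x j" | "x j < x k"
    by linarith
  then show ?case
  proof cases
    case 1
    define y where "y = x \<circ> stransp j"
    have "y permutes {1..n}"
      unfolding y_def using Suc.prems(1) j(1,2) by (rule permutes_comp_stransp)
    moreover have "single_crossing n i y p q"
      using single_crossing_comp_stransp [OF Suc.prems(4) j(1,2)] j Suc.prems(6) c
      by (simp add: y_def)
    moreover have "y j = x k" "y q = x q" "y p = x p"
      using j Suc.prems(6) c by (simp_all add: y_def)
    ultimately have "repeats_in_reduced_word n i y"
      using Suc.prems(2,3,5-8) Suc.hyps(2) j by (intro Suc.hyps(1) [of j y]) auto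
    then show ?thesis
      using repeats_in_reduced_word_descent [OF Suc.prems(1) j(1,2)] 1 j(3) by (simp add: y_def)
  next
    case 2
    show ?thesis
      using Suc j 2 prev_gt c by (intro Suc.hyps(1) [of j x]) auto
  qed
qed

lemma repeats_in_reduced_word_if_between:
  assumes "x permutes {1..n}" "1 \<le> i" "i < n" "single_crossing n i x p q"
    and "p < k" "k < q" "x q < x k" "x k < x p"
  shows "repeats_in_reduced_word n i x"
  using assms repeats_if_between_le [of x n i p q k] repeats_if_between_gt [of x n i p q k]
  by (cases "k \<le> i") auto

lemma reduced_word_remove_unique_letter:
  assumes ws: "reduced_word n w ws" and once: "count_list ws i = 1"
    and no_repeat: "\<not> repeats_in_reduced_word n i w"
  shows "\<exists>p q. single_crossing n i w p q \<and> reduced_word n (w \<circ> transpose p q) (removeAll i ws)"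
proof -
  obtain a b where ab: "ws = a @ i # b" "i \<notin> set a" "i \<notin> set b"
    using count_list_Suc_split_first [of ws i 0] once by (auto simp: count_list_0_iff)
  have words: "is_word n a" "is_word n b" and i: "1 \<le> i" "i < n" and w: "word_perm ws = w"
    using ws ab(1) by (auto simp: reduced_word_def is_word_def)
  have w_perm: "w permutes {1..n}"
    using word_perm_permutes [of n ws] ws w by (simp add: reduced_word_def)
  obtain p q where sc: "single_crossing n i w p q"
    and remove: "word_perm (a @ b) = w \<circ> transpose p q"
    using word_perm_remove_letter [OF i words ab(2,3)] ab(1) w by auto
  have "n_inversions n (w \<circ> transpose p q) + 1 = n_inversions n w"
  proof (rule n_inversions_comp_transpose [OF w_perm])
    show "1 \<le> p" "p < q" "q \<le> n" "w q < w p"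
      using sc by (auto simp: single_crossing_def)
    show "w k < w q \<or> w p < w k" if "p < k" "k < q" for k
    proof -
      have "w k \<noteq> w q" "w k \<noteq> w p"
        using permutes_apply_neq [OF w_perm] that by auto
      then show ?thesis
        using repeats_in_reduced_word_if_between [OF w_perm i sc that] no_repeat by fastforce
    qed
  qed
  moreover have "length ws = n_inversions n w"
    using ws reduced_word_iff_length [OF w_perm] by simp
  ultimately have "reduced_word n (w \<circ> transpose p q) (a @ b)"
    using reduced_word_iff_length [OF word_perm_permutes [of n "a @ b"]] words remove ab(1)
    by simp
  then show ?thesis
    using sc ab by auto
qed

theorem corollary2p5:
  fixes n i :: nat and w :: "nat \<Rightarrow> nat"
  assumes "w permutes {1..n}"
    and "i \<in> supp n w"
    and "\<forall>ws. reduced_word n w ws \<longrightarrow> count_list ws i = 1"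
  shows "(\<forall>ws. reduced_word n w ws \<longrightarrow> is_reduced n (removeAll i ws)) \<and>
         (\<exists>v. \<forall>ws. reduced_word n w ws \<longrightarrow> reduced_word n v (removeAll i ws))"
proof -
  have no_repeat: "\<not> repeats_in_reduced_word n i w"
    using assms(3) by (auto simp: repeats_in_reduced_word_def)
  obtain ws\<^sub>0 where "reduced_word n w ws\<^sub>0"
    using assms(2) by (auto simp: supp_def)
  then obtain p q where sc: "single_crossing n i w p q"
    using reduced_word_remove_unique_letter assms(3) no_repeat by blast
  have v: "reduced_word n (w \<circ> transpose p q) (removeAll i ws)" if "reduced_word n w ws" for ws
    using reduced_word_remove_unique_letter [of n w ws i] that assms(3) no_repeat
      single_crossing_unique [OF sc] by blast
  then have "is_reduced n (removeAll i ws)" if "reduced_word n w ws" for ws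
    using that unfolding is_reduced_def by (metis reduced_word_def)
  with v show ?thesis
    by blast
qed

end
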